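(* Let $f,g$ be mixed polynomials in $\mathbf z=(z_1,z_2)$, $C=\{f=0\}$, $C'=\{g=0\}$, and let $P\in C\cap C'$ be a point where $C$ and $C'$ are both mixed non-singular and intersect transversely. Then the local intersection number defined as the mapping degree of $\psi=\varphi/\|\varphi\|:S^3_\varepsilon(P)\to S^3$, $\varphi=(f_{\mathbb R},f_I,g_{\mathbb R},g_I)$, coincides with the topological intersection number $\operatorname{Sign}(\mathbf u_1,\mathbf u_2,\mathbf v_1,\mathbf v_2)$, where $(\mathbf u_1,\mathbf u_2)$, $(\mathbf v_1,\mathbf v_2)$ are positive bases of $T_PC$, $T_PC'$.
   Context: Identify $\mathbb C^2$ with $\mathbb R^4$ via $z_j=x_j+iy_j$, coordinates $(x_1,y_1,x_2,y_2)$, standard orientation. Write $f=f_{\mathbb R}+if_I$, $g=g_{\mathbb R}+ig_I$ with real polynomial real and imaginary parts. $C$ is mixed non-singular at $P$ if the Jacobian of $(f_{\mathbb R},f_I)$ has rank $2$ at $P$; $T_PC$ is oriented so that $(\mathbf u_1,\mathbf u_2)$ is positive iff $(\mathbf u_1,\mathbf u_2,\operatorname{grad} f_{\mathbb R}(P),\operatorname{grad} f_I(P))$ is a positive basis of $\mathbb R^4$ (similarly for $C'$). $\operatorname{Sign}$ of a basis of $\mathbb R^4$ is the sign of its determinant. $S^3_\varepsilon(P)=\{\mathbf x\in\mathbb R^4:\|\mathbf x-P\|=\varepsilon\}$, with $\varepsilon>0$ small enough that $P$ is the only point of $C\cap C'$ in the closed ball of radius $\varepsilon$ about $P$; the sphere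 is oriented as the boundary of this ball. *)

theory Defs
  imports "HOL-Analysis.Analysis" "HOL-Homology.Homology"
begin

definition mixed_poly :: "(complex \<times> complex \<Rightarrow> complex) \<Rightarrow> bool" where
  "mixed_poly f \<longleftrightarrow>
     (\<exists>(c :: nat \<times> nat \<times> nat \<times> nat \<Rightarrow> complex) (N :: nat).
        (\<forall>z1 z2. f (z1, z2) =
           (\<Sum>a\<le>N. \<Sum>b\<le>N. \<Sum>d\<le>N. \<Sum>e\<le>N.
               c (a, b, d, e) * z1 ^ a * cnj z1 ^ b * z2 ^ d * cnj z2 ^ e)))"

definition to_C2 :: "real^4 \<Rightarrow> complex \<times> complex" where
  "to_C2 x = (Complex (x$1) (x$2), Complex (x$3) (x$4))"

definition re_part :: "(complex \<times> complex \<Rightarrow> complex) \<Rightarrow> real^4 \<Rightarrow> real" where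
  "re_part f x = Re (f (to_C2 x))"

definition im_part :: "(complex \<times> complex \<Rightarrow> complex) \<Rightarrow> real^4 \<Rightarrow> real" where
  "im_part f x = Im (f (to_C2 x))"

definition zero_set :: "(complex \<times> complex \<Rightarrow> complex) \<Rightarrow> (real^4) set" where
  "zero_set f = {x. f (to_C2 x) = 0}"

definition jac :: "(complex \<times> complex \<Rightarrow> complex) \<Rightarrow> real^4 \<Rightarrow> real^4^2" where
  "jac f P = matrix (frechet_derivative (\<lambda>x. vector [re_part f x, im_part f x] :: real^2) (at P))"

definition grad_re :: "(complex \<times> complex \<Rightarrow> complex) \<Rightarrow> real^4 \<Rightarrow> real^4" where
  "grad_re f P = row 1 (jac f P)"

definition grad_im :: "(complex \<times> complex \<Rightarrow> complex) \<Rightarrow> real^4 \<Rightarrow> real^4" where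
  "grad_im f P = row 2 (jac f P)"

definition mixed_nonsingular_at :: "(complex \<times> complex \<Rightarrow> complex) \<Rightarrow> real^4 \<Rightarrow> bool" where
  "mixed_nonsingular_at f P \<longleftrightarrow> rank (jac f P) = 2"

definition tangent_space :: "(complex \<times> complex \<Rightarrow> complex) \<Rightarrow> real^4 \<Rightarrow> (real^4) set" where
  "tangent_space f P = {v. jac f P *v v = 0}"

definition transverse_at ::
  "(complex \<times> complex \<Rightarrow> complex) \<Rightarrow> (complex \<times> complex \<Rightarrow> complex) \<Rightarrow> real^4 \<Rightarrow> bool" where
  "transverse_at f g P \<longleftrightarrow> span (tangent_space f P \<union> tangent_space g P) = UNIV"

text \<open>Determinant of the 4 vectors (as rows; same sign as with columns).\<close>
definition det4 :: "real^4 \<Rightarrow> real^4 \<Rightarrow> real^4 \<Rightarrow> real^4 \<Rightarrow> real" where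
  "det4 a b c d = det (vector [a, b, c, d] :: real^4^4)"

definition positive_tangent_basis ::
  "(complex \<times> complex \<Rightarrow> complex) \<Rightarrow> real^4 \<Rightarrow> real^4 \<Rightarrow> real^4 \<Rightarrow> bool" where
  "positive_tangent_basis f P u1 u2 \<longleftrightarrow>
     u1 \<in> tangent_space f P \<and> u2 \<in> tangent_space f P \<and>
     independent {u1, u2} \<and> u1 \<noteq> u2 \<and> span {u1, u2} = tangent_space f P \<and>
     det4 u1 u2 (grad_re f P) (grad_im f P) > 0"

text \<open>Conversion between real^4 and the coordinates nat => real used by nsphere 3.\<close>
definition to_R4 :: "(nat \<Rightarrow> real) \<Rightarrow> real^4" where
  "to_R4 y = vector [y 0, y 1, y 2, y 3]"

definition from_R4 :: "real^4 \<Rightarrow> nat \<Rightarrow> real" where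
  "from_R4 v = (\<lambda>i. if i = 0 then v$1 else if i = 1 then v$2 else if i = 2 then v$3
                     else if i = 3 then v$4 else 0)"

definition phi_map ::
  "(complex \<times> complex \<Rightarrow> complex) \<Rightarrow> (complex \<times> complex \<Rightarrow> complex) \<Rightarrow> real^4 \<Rightarrow> real^4" where
  "phi_map f g x = vector [re_part f x, im_part f x, re_part g x, im_part g x]"

text \<open>Local intersection number: degree of psi = phi/|phi| : S^3_eps(P) -> S^3, where
  S^3_eps(P) is identified with the unit sphere S^3 via the orientation preserving map
  y \<mapsto> P + eps y.\<close>
definition local_intersection_degree ::
  "(complex \<times> complex \<Rightarrow> complex) \<Rightarrow> (complex \<times> complex \<Rightarrow> complex) \<Rightarrow> real^4 \<Rightarrow> real \<Rightarrow> int" where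
  "local_intersection_degree f g P \<epsilon> =
     Brouwer_degree2 3 (\<lambda>y. from_R4 (sgn (phi_map f g (P + \<epsilon> *\<^sub>R to_R4 y))))"

end

theory Submission
  imports Defs
begin

text \<open>Rescaling the ball of radius \<open>\<epsilon>\<close> about the isolated zero \<open>P\<close> of
  \<open>\<phi> = (f\<^sub>R, f\<^sub>I, g\<^sub>R, g\<^sub>I)\<close> down to radius \<open>0\<close> is a homotopy, free of zeros on the sphere,
  from \<open>\<phi>\<close> to its derivative at \<open>P\<close>; so the local degree is the degree of the linear map
  whose rows are the gradients of \<open>f\<^sub>R, f\<^sub>I, g\<^sub>R, g\<^sub>I\<close>. The degree of a linear isomorphism
  of \<open>\<real>\<^sup>4\<close> is the sign of its determinant, as one checks on elementary matrices.
  Finally, the gradients of \<open>f\<close> are orthogonal to \<open>T\<^sub>PC\<close> and those of \<open>g\<close> to \<open>T\<^sub>PC'\<close>,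
  and a Gram determinant computation shows that this determinant has the sign of
  \<open>det(u\<^sub>1, u\<^sub>2, v\<^sub>1, v\<^sub>2)\<close>.\<close>

section \<open>Determinants of four vectors\<close>

lemma vector_4 [simp]:
  "(vector [x, y, z, w] :: ('a::zero)^4) $ 1 = x"
  "(vector [x, y, z, w] :: ('a::zero)^4) $ 2 = y"
  "(vector [x, y, z, w] :: ('a::zero)^4) $ 3 = z"
  "(vector [x, y, z, w] :: ('a::zero)^4) $ 4 = w"
  unfolding vector_def by simp_all

lemma det_4:
  "det (A::'a::comm_ring_1^4^4) =
  A$1$1*A$2$2*A$3$3*A$4$4 - A$1$1*A$2$2*A$3$4*A$4$3 - A$1$1*A$2$3*A$3$2*A$4$4
+ A$1$1*A$2$3*A$3$4*A$4$2 + A$1$1*A$2$4*A$3$2*A$4$3 - A$1$1*A$2$4*A$3$3*A$4$2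
- A$1$2*A$2$1*A$3$3*A$4$4 + A$1$2*A$2$1*A$3$4*A$4$3 + A$1$2*A$2$3*A$3$1*A$4$4
- A$1$2*A$2$3*A$3$4*A$4$1 - A$1$2*A$2$4*A$3$1*A$4$3 + A$1$2*A$2$4*A$3$3*A$4$1
+ A$1$3*A$2$1*A$3$2*A$4$4 - A$1$3*A$2$1*A$3$4*A$4$2 - A$1$3*A$2$2*A$3$1*A$4$4
+ A$1$3*A$2$2*A$3$4*A$4$1 + A$1$3*A$2$4*A$3$1*A$4$2 - A$1$3*A$2$4*A$3$2*A$4$1
- A$1$4*A$2$1*A$3$2*A$4$3 + A$1$4*A$2$1*A$3$3*A$4$2 + A$1$4*A$2$2*A$3$1*A$4$3
- A$1$4*A$2$2*A$3$3*A$4$1 - A$1$4*A$2$3*A$3$1*A$4$2 + A$1$4*A$2$3*A$3$2*A$4$1"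
proof -
  have f1: "finite {2::4, 3, 4}" "1 \<notin> {2::4, 3, 4}" by auto
  have f2: "finite {3::4, 4}" "2 \<notin> {3::4, 4}" by auto
  have f3: "finite {4::4}" "3 \<notin> {4::4}" by auto
  show ?thesis
    unfolding det_def UNIV_4 sum_over_permutations_insert[OF f1]
      sum_over_permutations_insert[OF f2] sum_over_permutations_insert[OF f3] permutes_sing
    by (simp add: sign_swap_id permutation_swap_id sign_compose sign_id swap_id_eq permutation_compose)
qed

lemma det4_mult_det4:
  "det4 a b c d * det4 p q r s =
   det (\<chi> i j. (vector [a, b, c, d] :: real^4^4) $ i \<bullet> (vector [p, q, r, s] :: real^4^4) $ j)"
proof -
  have "det4 a b c d * det4 p q r s
      = det ((vector [a, b, c, d] :: real^4^4) ** transpose (vector [p, q, r, s]))"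
    by (simp add: det4_def det_mul det_transpose)
  also have "(vector [a, b, c, d] :: real^4^4) ** transpose (vector [p, q, r, s])
     = (\<chi> i j. (vector [a, b, c, d] :: real^4^4) $ i \<bullet> (vector [p, q, r, s] :: real^4^4) $ j)"
    by (simp add: matrix_matrix_mult_def transpose_def inner_vec_def vec_eq_iff)
  finally show ?thesis .
qed

lemma det4_swap_pairs: "det4 c d a b = det4 a b c d"
  unfolding det4_def det_4 by (simp add: algebra_simps)

lemma det4_neq_0_if_span_eq_UNIV:
  assumes "span {a, b, c, d} = UNIV"
  shows "det4 a b c d \<noteq> 0"
proof -
  let ?A = "vector [a, b, c, d] :: real^4^4"
  have "rows ?A = (\<lambda>i. ?A $ i) ` UNIV"
    by (auto simp: rows_def row_def)
  then have "rows ?A = {a, b, c, d}"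
    by (simp add: UNIV_4)
  then obtain B :: "real^4^4" where "B ** ?A = mat 1"
    using assms matrix_left_invertible_span_rows by metis
  then show ?thesis
    unfolding det4_def using invertible_left_inverse invertible_det_nz by blast
qed

text \<open>Multiplying each determinant by \<open>det(u\<^sub>1, u\<^sub>2, v\<^sub>1, v\<^sub>2)\<close> gives a Gram determinant
  which, by the orthogonality hypotheses, factors into \<open>2 \<times> 2\<close> minors of inner products.\<close>

lemma sgn_det4_normals_eq:
  fixes a1 a2 b1 b2 u1 u2 v1 v2 :: "real^4"
  assumes "a1 \<bullet> u1 = 0" "a1 \<bullet> u2 = 0" "a2 \<bullet> u1 = 0" "a2 \<bullet> u2 = 0"
    and "b1 \<bullet> v1 = 0" "b1 \<bullet> v2 = 0" "b2 \<bullet> v1 = 0" "b2 \<bullet> v2 = 0"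
    and pos_a: "det4 u1 u2 a1 a2 > 0" and pos_b: "det4 v1 v2 b1 b2 > 0"
    and d: "det4 u1 u2 v1 v2 \<noteq> 0"
  shows "sgn (det4 a1 a2 b1 b2) = sgn (det4 u1 u2 v1 v2)"
proof -
  define AV where "AV = (a1 \<bullet> v1) * (a2 \<bullet> v2) - (a1 \<bullet> v2) * (a2 \<bullet> v1)"
  define BU where "BU = (b1 \<bullet> u1) * (b2 \<bullet> u2) - (b1 \<bullet> u2) * (b2 \<bullet> u1)"
  define gram_u where "gram_u = (u1 \<bullet> u1) * (u2 \<bullet> u2) - (u1 \<bullet> u2) * (u2 \<bullet> u1)"
  define gram_v where "gram_v = (v1 \<bullet> v1) * (v2 \<bullet> v2) - (v1 \<bullet> v2) * (v2 \<bullet> v1)"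
  define D where "D = det4 u1 u2 v1 v2"
  have ab: "det4 a1 a2 b1 b2 * D = AV * BU"
    unfolding D_def det4_mult_det4 det_4 AV_def BU_def
    using assms by (simp add: inner_commute algebra_simps)
  have ua: "det4 u1 u2 a1 a2 * D = gram_u * AV"
    unfolding D_def det4_mult_det4 det_4 AV_def gram_u_def
    using assms by (simp add: inner_commute algebra_simps)
  have vb: "det4 v1 v2 b1 b2 * D = gram_v * BU"
    unfolding D_def det4_swap_pairs[of u1 u2 v1 v2] det4_mult_det4 det_4 BU_def gram_v_def
    using assms by (simp add: inner_commute algebra_simps)
  have "gram_u \<ge> 0" "gram_v \<ge> 0"
    unfolding gram_u_def gram_v_def
    using Cauchy_Schwarz_ineq[of u1 u2] Cauchy_Schwarz_ineq[of v1 v2]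
    by (simp_all add: inner_commute power2_eq_square)
  define k where "k = det4 u1 u2 a1 a2 * det4 v1 v2 b1 b2"
  have "k * D * D = gram_u * gram_v * (det4 a1 a2 b1 b2 * D)"
    unfolding k_def ab using ua vb by (metis mult.assoc mult.commute)
  then have kD: "k * D = gram_u * gram_v * det4 a1 a2 b1 b2"
    using d D_def by (metis mult.assoc mult_right_cancel)
  have "k > 0" using pos_a pos_b k_def by simp
  with kD d D_def \<open>gram_u \<ge> 0\<close> \<open>gram_v \<ge> 0\<close> have "gram_u * gram_v > 0"
    by (metis mult_eq_0_iff order_le_less mult_pos_pos)
  with kD \<open>k > 0\<close> show ?thesis
    unfolding D_def by (metis sgn_mult sgn_pos mult_1)
qed

section \<open>The unit sphere of \<open>\<real>\<^sup>4\<close> as \<open>nsphere 3\<close>\<close>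

lemma continuous_map_vec_nthI:
  fixes f :: "'a \<Rightarrow> real^'n"
  assumes "\<And>i. continuous_map X euclidean (\<lambda>x. f x $ i)"
  shows "continuous_map X euclidean f"
  using assms unfolding continuous_map_atin limitin_canonical_iff
  by (blast intro: vec_tendstoI)

lemma to_R4_nth [simp]:
  "to_R4 y $ 1 = y 0" "to_R4 y $ 2 = y 1" "to_R4 y $ 3 = y 2" "to_R4 y $ 4 = y 3"
  by (simp_all add: to_R4_def)

lemma norm_vec_4: "norm (x::real^4) = sqrt ((x$1)\<^sup>2 + (x$2)\<^sup>2 + (x$3)\<^sup>2 + (x$4)\<^sup>2)"
  by (simp add: norm_vec_def L2_set_def sum_4)

lemma topspace_nsphere_3:
  "topspace (nsphere 3) = {y. y 0 ^ 2 + y 1 ^ 2 + y 2 ^ 2 + y 3 ^ 2 = 1 \<and> (\<forall>i>3. y i = (0::real))}"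
  by (simp add: nsphere numeral_3_eq_3 atMost_Suc numeral_2_eq_2 add_ac)

lemma to_R4_in_sphere: "y \<in> topspace (nsphere 3) \<Longrightarrow> to_R4 y \<in> sphere 0 1"
  by (simp add: topspace_nsphere_3 norm_vec_4)

lemma from_R4_in_topspace: "v \<in> sphere (0::real^4) 1 \<Longrightarrow> from_R4 v \<in> topspace (nsphere 3)"
  by (simp add: topspace_nsphere_3 norm_vec_4 from_R4_def)

lemma to_R4_from_R4 [simp]: "to_R4 (from_R4 v) = v"
  by (simp add: to_R4_def from_R4_def vec_eq_iff forall_4)

lemma from_R4_to_R4: "y \<in> topspace (nsphere 3) \<Longrightarrow> from_R4 (to_R4 y) = y"
  by (auto simp: topspace_nsphere_3 from_R4_def fun_eq_iff)

lemma continuous_map_to_R4: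
  "continuous_map (nsphere 3) (top_of_set (sphere (0::real^4) 1)) to_R4"
proof -
  have "continuous_map (nsphere 3) euclidean to_R4"
  proof (rule continuous_map_vec_nthI)
    fix i :: 4
    have "i = 1 \<or> i = 2 \<or> i = 3 \<or> i = 4" by (rule exhaust_4)
    then show "continuous_map (nsphere 3) euclideanreal (\<lambda>x. to_R4 x $ i)"
      by (auto intro: continuous_map_nsphere_projection)
  qed
  then show ?thesis
    using to_R4_in_sphere by (auto simp: continuous_map_in_subtopology)
qed

lemma continuous_map_from_R4:
  "continuous_map (top_of_set (sphere (0::real^4) 1)) (nsphere 3) from_R4"
proof -
  have "continuous_map (top_of_set (sphere (0::real^4) 1)) (powertop_real UNIV) from_R4"
    unfolding continuous_map_componentwise_UNIV
  proof
    fix k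
    show "continuous_map (top_of_set (sphere 0 1)) euclideanreal (\<lambda>x. from_R4 x k)"
      unfolding from_R4_def continuous_map_iff_continuous
      by (cases "k = 0"; cases "k = 1"; cases "k = 2"; cases "k = 3")
         (auto intro!: continuous_intros)
  qed
  then show ?thesis
    using from_R4_in_topspace by (auto simp: continuous_map_in_subtopology nsphere)
qed

section \<open>Degree of maps of the unit sphere of \<open>\<real>\<^sup>4\<close>\<close>

text \<open>Meaningful only when \<open>F\<close> has no zero on the unit sphere.\<close>

definition sphere_degree :: "(real^4 \<Rightarrow> real^4) \<Rightarrow> int" where
  "sphere_degree F = Brouwer_degree2 3 (\<lambda>y. from_R4 (sgn (F (to_R4 y))))"

lemma continuous_map_sgn_sphere:
  assumes "continuous_on S K" "\<forall>p\<in>S. K p \<noteq> (0::real^4)"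
  shows "continuous_map (top_of_set S) (top_of_set (sphere 0 1)) (\<lambda>p. sgn (K p))"
  using assms by (auto simp: continuous_map_in_subtopology norm_sgn intro!: continuous_intros)

lemma continuous_map_nsphere_sgn:
  assumes "continuous_on (sphere 0 1) F" "\<forall>x\<in>sphere 0 1. F x \<noteq> (0::real^4)"
  shows "continuous_map (nsphere 3) (nsphere 3) (\<lambda>y. from_R4 (sgn (F (to_R4 y))))"
proof -
  have "continuous_map (nsphere 3) (nsphere 3) (from_R4 \<circ> (\<lambda>p. sgn (F p)) \<circ> to_R4)"
    by (intro continuous_map_compose[OF _ continuous_map_from_R4]
        continuous_map_compose[OF continuous_map_to_R4] continuous_map_sgn_sphere assms)
  then show ?thesis by (simp add: o_def)
qed

lemma sphere_degree_cong:
  assumes "\<And>v. v \<in> sphere 0 1 \<Longrightarrow> sgn (F v) = sgn (G v)"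
  shows "sphere_degree F = sphere_degree G"
  unfolding sphere_degree_def
proof (rule Brouwer_degree2_eq)
  fix y assume "y \<in> topspace (nsphere 3)"
  then show "from_R4 (sgn (F (to_R4 y))) = from_R4 (sgn (G (to_R4 y)))"
    using assms to_R4_in_sphere by presburger
qed

lemma sphere_degree_id: "sphere_degree (\<lambda>x. x) = 1"
proof -
  have "sphere_degree (\<lambda>x. x) = Brouwer_degree2 3 id"
    unfolding sphere_degree_def
  proof (rule Brouwer_degree2_eq)
    fix y assume y: "y \<in> topspace (nsphere 3)"
    then have "norm (to_R4 y) = 1" using to_R4_in_sphere by simp
    then show "from_R4 (sgn (to_R4 y)) = id y" using y by (simp add: sgn_div_norm from_R4_to_R4)
  qed
  then show ?thesis by simp
qed

lemma sphere_degree_homotopic: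
  fixes K :: "real \<times> (real^4) \<Rightarrow> real^4"
  assumes K: "continuous_on ({0..1} \<times> sphere 0 1) K"
    and nonzero: "\<forall>t\<in>{0..1}. \<forall>x\<in>sphere 0 1. K (t, x) \<noteq> 0"
  shows "sphere_degree (\<lambda>x. K (0, x)) = sphere_degree (\<lambda>x. K (1, x))"
  unfolding sphere_degree_def
proof (rule Brouwer_degree2_homotopic)
  have "continuous_map (prod_topology (top_of_set {0..1}) (nsphere 3))
      (prod_topology (top_of_set {0..1::real}) (top_of_set (sphere (0::real^4) 1)))
      (\<lambda>(t, y). (id t, to_R4 y))"
    unfolding continuous_map_prod_top using continuous_map_to_R4 by auto
  then have to_cyl: "continuous_map (prod_topology (top_of_set {0..1::real}) (nsphere 3))
      (top_of_set ({0..1} \<times> sphere (0::real^4) 1)) (\<lambda>(t, y). (t, to_R4 y))"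
    by (simp flip: subtopology_Times)
  have "continuous_map (top_of_set ({0..1} \<times> sphere 0 1)) (top_of_set (sphere 0 1))
      (\<lambda>p. sgn (K p))"
    using K nonzero by (intro continuous_map_sgn_sphere) auto
  then have "continuous_map (prod_topology (top_of_set {0..1}) (nsphere 3)) (nsphere 3)
      (from_R4 \<circ> (\<lambda>p. sgn (K p)) \<circ> (\<lambda>(t, y). (t, to_R4 y)))"
    using continuous_map_compose[OF to_cyl continuous_map_compose[OF _ continuous_map_from_R4]]
    by (simp add: o_assoc)
  then show "homotopic_with (\<lambda>x. True) (nsphere 3) (nsphere 3)
      (\<lambda>y. from_R4 (sgn (K (0, to_R4 y)))) (\<lambda>y. from_R4 (sgn (K (1, to_R4 y))))"
    unfolding homotopic_with_def
    by (intro exI[of _ "\<lambda>(t, y). from_R4 (sgn (K (t, to_R4 y)))"])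
       (auto simp: o_def case_prod_unfold)
qed

lemma sgn_linear_sgn: "linear F \<Longrightarrow> sgn (F (sgn v)) = sgn (F (v::real^4) :: real^4)"
  by (cases "v = 0") (auto simp: linear_0 sgn_div_norm linear_scale sgn_scaleR)

lemma sphere_degree_compose:
  assumes "linear F" "linear G" "inj F" "inj G"
  shows "sphere_degree (F \<circ> G) = sphere_degree F * sphere_degree G"
proof -
  have maps: "continuous_map (nsphere 3) (nsphere 3) (\<lambda>y. from_R4 (sgn (H (to_R4 y))))"
    if "linear H" "inj H" for H
    using that linear_injective_0[of H]
    by (intro continuous_map_nsphere_sgn) (auto simp: linear_continuous_on linear_conv_bounded_linear)
  have "sphere_degree (F \<circ> G) = Brouwer_degree2 3
      ((\<lambda>y. from_R4 (sgn (F (to_R4 y)))) \<circ> (\<lambda>y. from_R4 (sgn (G (to_R4 y)))))"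
    unfolding sphere_degree_def using assms(1) by (simp add: o_def sgn_linear_sgn)
  also have "\<dots> = sphere_degree F * sphere_degree G"
    unfolding sphere_degree_def using assms by (intro Brouwer_degree2_compose maps)
  finally show ?thesis .
qed

section \<open>Degree of linear isomorphisms\<close>

definition coord_scaling :: "real \<Rightarrow> 4 \<Rightarrow> real^4 \<Rightarrow> real^4" where
  "coord_scaling s k x = (\<chi> i. (if i = k then s else 1) * x$i)"

definition coord_swap :: "4 \<Rightarrow> 4 \<Rightarrow> real^4 \<Rightarrow> real^4" where
  "coord_swap m n x = (\<chi> i. x $ Transposition.transpose m n i)"

lemma linear_coord_scaling: "linear (coord_scaling s k)"
  by (rule linearI) (auto simp: coord_scaling_def vec_eq_iff algebra_simps)

lemma inj_coord_scaling: "s \<noteq> 0 \<Longrightarrow> inj (coord_scaling s k)"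
  by (rule injI) (auto simp: coord_scaling_def vec_eq_iff split: if_splits)

lemma linear_coord_swap: "linear (coord_swap m n)"
  by (rule linearI) (auto simp: coord_swap_def vec_eq_iff)

lemma coord_swap_coord_swap [simp]: "coord_swap m n (coord_swap m n x) = x"
  by (simp add: coord_swap_def vec_eq_iff)

lemma inj_coord_swap: "inj (coord_swap m n)"
  by (metis injI coord_swap_coord_swap)

lemma sphere_degree_reflection_1: "sphere_degree (coord_scaling (-1) 1) = -1"
proof -
  have "sphere_degree (coord_scaling (-1) 1) =
      Brouwer_degree2 3 (\<lambda>x i. if i = 0 then -x i else x i)"
    unfolding sphere_degree_def
  proof (rule Brouwer_degree2_eq)
    fix y assume y: "y \<in> topspace (nsphere 3)"
    then have "norm (coord_scaling (-1) 1 (to_R4 y)) = 1"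
      using to_R4_in_sphere by (simp add: norm_vec_4 coord_scaling_def)
    then have "sgn (coord_scaling (-1) 1 (to_R4 y)) = coord_scaling (-1) 1 (to_R4 y)"
      by (simp add: sgn_div_norm)
    then show "from_R4 (sgn (coord_scaling (-1) 1 (to_R4 y))) = (\<lambda>i. if i = 0 then - y i else y i)"
      using y by (auto simp: fun_eq_iff from_R4_def coord_scaling_def topspace_nsphere_3)
  qed
  then show ?thesis by (simp add: Brouwer_degree2_reflection)
qed

lemma sphere_degree_coord_swap_squared:
  "sphere_degree (coord_swap m n) * sphere_degree (coord_swap m n) = 1"
proof -
  have "sphere_degree (coord_swap m n \<circ> coord_swap m n) =
      sphere_degree (coord_swap m n) * sphere_degree (coord_swap m n)"
    by (rule sphere_degree_compose) (auto simp: linear_coord_swap inj_coord_swap)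
  moreover have "coord_swap m n \<circ> coord_swap m n = (\<lambda>x. x)" by auto
  ultimately show ?thesis using sphere_degree_id by simp
qed

lemma sphere_degree_reflection: "sphere_degree (coord_scaling (-1) k) = -1"
proof (cases "k = 1")
  case True then show ?thesis using sphere_degree_reflection_1 by simp
next
  case False
  have eq: "coord_scaling (-1) k = coord_swap 1 k \<circ> (coord_scaling (-1) 1 \<circ> coord_swap 1 k)"
    using False
    by (auto simp: fun_eq_iff vec_eq_iff coord_scaling_def coord_swap_def Transposition.transpose_def)
  have "sphere_degree (coord_scaling (-1) k) =
      sphere_degree (coord_swap 1 k) * (sphere_degree (coord_scaling (-1) 1) * sphere_degree (coord_swap 1 k))"
    unfolding eq
    by (subst sphere_degree_compose; (subst sphere_degree_compose)?)
       (auto simp: linear_coord_swap inj_coord_swap linear_coord_scaling inj_coord_scaling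
         intro: linear_compose inj_compose)
  then show ?thesis using sphere_degree_reflection_1 sphere_degree_coord_swap_squared
    by (simp add: algebra_simps)
qed

lemma sphere_degree_coord_scaling_sgn:
  "c \<noteq> 0 \<Longrightarrow> real_of_int (sphere_degree (coord_scaling (sgn c) k)) = sgn c"
proof (cases "c > 0")
  case True
  then have "coord_scaling (sgn c) k = (\<lambda>x. x)" by (auto simp: coord_scaling_def vec_eq_iff)
  then show ?thesis using True sphere_degree_id by simp
next
  case False
  moreover assume "c \<noteq> 0"
  ultimately show ?thesis using sphere_degree_reflection by simp
qed

lemma convex_combination_sgn_neq_0:
  fixes c t :: real
  assumes "c \<noteq> 0" "0 \<le> t" "t \<le> 1"
  shows "(1 - t) * c + t * sgn c \<noteq> 0"
proof (cases "c > 0")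
  case True
  have "(1 - t) * c \<ge> 0" using assms True by simp
  moreover have "t = 0 \<or> t > 0" using assms by auto
  ultimately show ?thesis using True by (auto simp: add_nonneg_pos)
next
  case False
  then have c: "c < 0" using assms by simp
  have "(1 - t) * c \<le> 0" using assms c by (simp add: mult_nonneg_nonpos)
  moreover have "t = 0 \<or> t > 0" using assms by auto
  ultimately show ?thesis using c by (auto simp: add_nonpos_neg)
qed

lemma sphere_degree_diagonal:
  assumes c: "\<And>i. c i \<noteq> 0"
  shows "real_of_int (sphere_degree (\<lambda>x. \<chi> i. c i * x$i)) =
    sgn (c 1) * sgn (c 2) * sgn (c 3) * sgn (c 4)"
proof -
  let ?K = "\<lambda>p::real \<times> (real^4). \<chi> i. ((1 - fst p) * c i + fst p * sgn (c i)) * snd p $ i"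
  have "sphere_degree (\<lambda>x. ?K (0, x)) = sphere_degree (\<lambda>x. ?K (1, x))"
  proof (rule sphere_degree_homotopic)
    show "continuous_on ({0..1} \<times> sphere 0 1) ?K"
      by (intro continuous_on_vec_lambda continuous_intros)
    show "\<forall>t\<in>{0..1}. \<forall>x\<in>sphere 0 1. ?K (t, x) \<noteq> 0"
    proof (intro ballI)
      fix t x assume t: "t \<in> {0..(1::real)}" and x: "(x::real^4) \<in> sphere 0 1"
      obtain i where i: "x$i \<noteq> 0"
        using x by (metis vec_eq_iff zero_index norm_zero mem_sphere_0 zero_neq_one)
      have "(1 - t) * c i + t * sgn (c i) \<noteq> 0" using convex_combination_sgn_neq_0[OF c] t by auto
      then have "?K (t, x) $ i \<noteq> 0" using i by simp
      then show "?K (t, x) \<noteq> 0" by (metis zero_index)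
    qed
  qed
  then have "sphere_degree (\<lambda>x. \<chi> i. c i * x$i) = sphere_degree (\<lambda>x. \<chi> i. sgn (c i) * x$i)" by simp
  also have "(\<lambda>x. \<chi> i. sgn (c i) * x$i) = coord_scaling (sgn (c 1)) 1 \<circ>
      (coord_scaling (sgn (c 2)) 2 \<circ> (coord_scaling (sgn (c 3)) 3 \<circ> coord_scaling (sgn (c 4)) 4))"
    by (auto simp: fun_eq_iff vec_eq_iff coord_scaling_def forall_4)
  also have "sphere_degree \<dots> = sphere_degree (coord_scaling (sgn (c 1)) 1) *
      (sphere_degree (coord_scaling (sgn (c 2)) 2) *
      (sphere_degree (coord_scaling (sgn (c 3)) 3) * sphere_degree (coord_scaling (sgn (c 4)) 4)))"
  proof -
    have "inj (coord_scaling (sgn (c k)) k)" for k by (rule inj_coord_scaling) (metis c sgn_zero_iff)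
    then show ?thesis
      by (subst sphere_degree_compose; (subst sphere_degree_compose)?; (subst sphere_degree_compose)?)
         (auto simp: linear_coord_scaling intro!: linear_compose inj_compose)
  qed
  finally show ?thesis using c by (simp add: sphere_degree_coord_scaling_sgn)
qed

text \<open>A rotation by \<open>t\<pi>/2\<close> in the \<open>(m, n)\<close>-plane composed with the reflection in the
  \<open>m\<close>-th coordinate joins that reflection to the swap of the two coordinates.\<close>

lemma sphere_degree_coord_swap:
  assumes mn: "m \<noteq> n"
  shows "sphere_degree (coord_swap m n) = -1"
proof -
  let ?K = "\<lambda>p::real \<times> (real^4). \<chi> i.
      if i = m then - cos (fst p * pi/2) * snd p $ m + sin (fst p * pi/2) * snd p $ n
      else if i = n then sin (fst p * pi/2) * snd p $ m + cos (fst p * pi/2) * snd p $ n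
      else snd p $ i"
  have "sphere_degree (\<lambda>x. ?K (0, x)) = sphere_degree (\<lambda>x. ?K (1, x))"
  proof (rule sphere_degree_homotopic)
    show "continuous_on ({0..1} \<times> sphere 0 1) ?K"
      apply (intro continuous_on_vec_lambda)
      subgoal for i by (cases "i = m"; cases "i = n") (auto intro!: continuous_intros)
      done
    show "\<forall>t\<in>{0..1}. \<forall>x\<in>sphere 0 1. ?K (t, x) \<noteq> 0"
    proof (intro ballI notI)
      fix t x assume x: "(x::real^4) \<in> sphere 0 1" and K0: "?K (t, x) = 0"
      define c where "c = cos (t * pi/2)"
      define s where "s = sin (t * pi/2)"
      have cs: "c\<^sup>2 + s\<^sup>2 = 1" by (simp add: c_def s_def add.commute)
      have zero: "?K (t, x) $ i = 0" for i using K0 by simp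
      have "- c * x$m + s * x$n = 0" "s * x$m + c * x$n = 0"
        using zero[of m] zero[of n] mn unfolding c_def s_def by simp_all
      moreover have "(c\<^sup>2 + s\<^sup>2) * x$m = - c * (- c * x$m + s * x$n) + s * (s * x$m + c * x$n)"
        and "(c\<^sup>2 + s\<^sup>2) * x$n = s * (- c * x$m + s * x$n) + c * (s * x$m + c * x$n)"
        by (simp_all add: algebra_simps power2_eq_square)
      ultimately have "x$m = 0" "x$n = 0"
        by (simp_all only: cs mult_1 mult_zero_right add_0_right)
      moreover have "x$i = 0" if "i \<noteq> m" "i \<noteq> n" for i
        using zero[of i] that by simp
      ultimately have "x = 0" unfolding vec_eq_iff by (metis zero_index)
      then show False using x by simp
    qed
  qed
  moreover have "(\<lambda>x. ?K (0, x)) = coord_scaling (-1) m"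
    using mn by (auto simp: fun_eq_iff vec_eq_iff coord_scaling_def)
  moreover have "(\<lambda>x. ?K (1, x)) = coord_swap m n"
    using mn by (auto simp: fun_eq_iff vec_eq_iff coord_swap_def Transposition.transpose_def)
  ultimately show ?thesis using sphere_degree_reflection by simp
qed

lemma sphere_degree_shear:
  assumes mn: "m \<noteq> n"
  shows "sphere_degree (\<lambda>x::real^4. \<chi> i. if i = m then x$m + x$n else x$i) = 1"
proof -
  let ?K = "\<lambda>p::real \<times> (real^4). \<chi> i. if i = m then snd p $ m + fst p * snd p $ n else snd p $ i"
  have "sphere_degree (\<lambda>x. ?K (0, x)) = sphere_degree (\<lambda>x. ?K (1, x))"
  proof (rule sphere_degree_homotopic)
    show "continuous_on ({0..1} \<times> sphere 0 1) ?K"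
      apply (intro continuous_on_vec_lambda)
      subgoal for i by (cases "i = m") (auto intro!: continuous_intros)
      done
    show "\<forall>t\<in>{0..1}. \<forall>x\<in>sphere 0 1. ?K (t, x) \<noteq> 0"
    proof (intro ballI notI)
      fix t x assume x: "(x::real^4) \<in> sphere 0 1" and K0: "?K (t, x) = 0"
      have zero: "?K (t, x) $ i = 0" for i using K0 by simp
      have off_m: "x$i = 0" if "i \<noteq> m" for i
        using zero[of i] that by simp
      moreover have "x$m = 0" using zero[of m] off_m[OF mn[symmetric]] by simp
      ultimately have "x = 0" unfolding vec_eq_iff by (metis zero_index)
      then show False using x by simp
    qed
  qed
  moreover have "(\<lambda>x. ?K (0, x)) = (\<lambda>x. x)"
    by (auto simp: fun_eq_iff vec_eq_iff)
  moreover have "(\<lambda>x. ?K (1, x)) = (\<lambda>x::real^4. \<chi> i. if i = m then x$m + x$n else x$i)"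
    by (auto simp: fun_eq_iff vec_eq_iff)
  ultimately show ?thesis using sphere_degree_id by simp
qed

lemma det_matrix_diagonal: "det (matrix (\<lambda>x::real^4. \<chi> i. c i * x$i)) = c 1 * c 2 * c 3 * c 4"
proof -
  have "matrix (\<lambda>x::real^4. \<chi> i. c i * x$i) = (\<chi> i j. if i = j then c i else 0)"
    unfolding matrix_def vec_eq_iff by (simp add: axis_def)
  moreover have "det (\<chi> i j. if i = j then c i else 0 :: real^4^4) = prod c UNIV"
    by (subst det_diagonal) auto
  moreover have "prod c UNIV = c 1 * c 2 * c 3 * c 4"
    unfolding UNIV_4 by simp
  ultimately show ?thesis by simp
qed

lemma det_matrix_coord_swap:
  assumes "m \<noteq> n"
  shows "det (matrix (coord_swap m n)) = -1"
proof -
  have "matrix (coord_swap m n) = (\<chi> i. (mat 1 :: real^4^4) $ Transposition.transpose m n i)"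
    unfolding matrix_def vec_eq_iff by (simp add: axis_def mat_def coord_swap_def)
  moreover have "det (\<chi> i. (mat 1 :: real^4^4) $ Transposition.transpose m n i) =
      of_int (sign (Transposition.transpose m n)) * det (mat 1 :: real^4^4)"
    by (rule det_permute_rows) (rule permutes_swap_id, auto)
  ultimately show ?thesis using assms by (simp add: sign_swap_id)
qed

lemma det_matrix_shear:
  assumes "m \<noteq> n"
  shows "det (matrix (\<lambda>x::real^4. \<chi> i. if i = m then x$m + x$n else x$i)) = 1"
proof -
  have "matrix (\<lambda>x::real^4. \<chi> i. if i = m then x$m + x$n else x$i)
      = (\<chi> k. if k = m then row m (mat 1) + 1 *s row n (mat 1) else row k (mat 1 :: real^4^4))"
    unfolding matrix_def vec_eq_iff by (simp add: axis_def mat_def row_def)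
  moreover have "det (\<chi> k. if k = m then row m (mat 1) + 1 *s row n (mat 1) else row k (mat 1 :: real^4^4))
      = det (mat 1 :: real^4^4)"
    by (rule det_row_operation) (rule assms)
  ultimately show ?thesis by simp
qed

lemma sphere_degree_linear:
  fixes F :: "real^4 \<Rightarrow> real^4"
  assumes "linear F" and "det (matrix F) \<noteq> 0"
  shows "real_of_int (sphere_degree F) = sgn (det (matrix F))"
proof -
  let ?deg_sgn = "\<lambda>F. det (matrix F) \<noteq> 0 \<longrightarrow> real_of_int (sphere_degree F) = sgn (det (matrix F))"
  have "?deg_sgn F"
  proof (rule induct_linear_elementary[OF \<open>linear F\<close>])
    fix f g :: "real^4 \<Rightarrow> real^4"
    assume fg: "linear f" "linear g" and IH: "?deg_sgn f" "?deg_sgn g"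
    have m: "matrix (f \<circ> g) = matrix f ** matrix g" by (rule matrix_compose[OF fg(2) fg(1)])
    show "?deg_sgn (f \<circ> g)"
    proof
      assume "det (matrix (f \<circ> g)) \<noteq> 0"
      then have "det (matrix f) \<noteq> 0" "det (matrix g) \<noteq> 0" unfolding m det_mul by auto
      moreover from this have "sphere_degree (f \<circ> g) = sphere_degree f * sphere_degree g"
        using fg det_nz_iff_inj by (intro sphere_degree_compose) auto
      ultimately show "real_of_int (sphere_degree (f \<circ> g)) = sgn (det (matrix (f \<circ> g)))"
        using IH unfolding m det_mul by (simp add: sgn_mult)
    qed
  next
    fix f :: "real^4 \<Rightarrow> real^4" and i
    assume "\<And>x. f x $ i = 0"
    then have "row i (matrix f) = 0"
      by (simp add: row_def matrix_def vec_eq_iff)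
    then show "?deg_sgn f" by (simp add: det_zero_row)
  next
    fix c :: "4 \<Rightarrow> real"
    show "?deg_sgn (\<lambda>x. \<chi> i. c i * x $ i)"
    proof
      assume "det (matrix (\<lambda>x. \<chi> i. c i * x $ i)) \<noteq> 0"
      then have "c i \<noteq> 0" for i using exhaust_4[of i] by (auto simp: det_matrix_diagonal)
      then show "real_of_int (sphere_degree (\<lambda>x. \<chi> i. c i * x $ i)) =
          sgn (det (matrix (\<lambda>x. \<chi> i. c i * x $ i)))"
        by (simp add: sphere_degree_diagonal det_matrix_diagonal sgn_mult)
    qed
  next
    fix m n :: 4 assume "m \<noteq> n"
    then show "?deg_sgn (\<lambda>x. \<chi> i. x $ Transposition.transpose m n i)"
      using sphere_degree_coord_swap det_matrix_coord_swap by (simp add: coord_swap_def[abs_def])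
  next
    fix m n :: 4 assume "m \<noteq> n"
    then show "?deg_sgn (\<lambda>x. \<chi> i. if i = m then x $ m + x $ n else x $ i)"
      by (simp add: sphere_degree_shear det_matrix_shear)
  qed
  then show ?thesis using assms(2) by blast
qed

section \<open>Local degree at a non-degenerate isolated zero\<close>

definition derivative_remainder ::
  "('a::real_normed_vector \<Rightarrow> 'b::real_normed_vector) \<Rightarrow> ('a \<Rightarrow> 'b) \<Rightarrow> 'a \<Rightarrow> 'a \<Rightarrow> 'b" where
  "derivative_remainder \<Phi> L P h = (if h = 0 then 0 else (\<Phi> (P + h) - \<Phi> P - L h) /\<^sub>R norm h)"

lemma continuous_on_derivative_remainder:
  assumes d: "(\<Phi> has_derivative L) (at P)" and c: "continuous_on UNIV \<Phi>"
  shows "continuous_on UNIV (derivative_remainder \<Phi> L P)"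
proof -
  have "isCont (derivative_remainder \<Phi> L P) h" for h
  proof (cases "h = 0")
    case True
    have "((\<lambda>h. norm (\<Phi> (P + h) - \<Phi> P - L h) / norm h) \<longlongrightarrow> 0) (at 0)"
      using d unfolding has_derivative_at by blast
    moreover have "\<forall>\<^sub>F h in at 0.
        norm (\<Phi> (P + h) - \<Phi> P - L h) / norm h = norm (derivative_remainder \<Phi> L P h)"
      unfolding eventually_at_filter derivative_remainder_def
      by (rule always_eventually) (simp add: divide_inverse_commute)
    ultimately have "((\<lambda>h. norm (derivative_remainder \<Phi> L P h)) \<longlongrightarrow> 0) (at 0)"
      using tendsto_cong by fastforce
    then show ?thesis
      using True unfolding isCont_def
      by (simp add: tendsto_norm_zero_cancel derivative_remainder_def)
  next
    case False
    have ev: "\<forall>\<^sub>F x in nhds h. (\<Phi> (P + x) - \<Phi> P - L x) /\<^sub>R norm x = derivative_remainder \<Phi> L P x"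
      using eventually_nhds_in_open[of "-{0}" h] False
      by (auto elim!: eventually_mono simp: derivative_remainder_def)
    have "isCont (\<lambda>x. \<Phi> (P + x)) h"
      using c by (auto intro!: continuous_intros simp: continuous_on_eq_continuous_at
          intro: isCont_o2[where g=\<Phi>])
    moreover have "isCont L h"
      using has_derivative_bounded_linear[OF d] by (simp add: linear_continuous_at)
    ultimately have "isCont (\<lambda>x. (\<Phi> (P + x) - \<Phi> P - L x) /\<^sub>R norm x) h"
      using False by (auto intro!: continuous_intros)
    then show ?thesis using isCont_cong[OF ev] by simp
  qed
  then show ?thesis by (simp add: continuous_on_eq_continuous_at)
qed

lemma derivative_remainder_scaleR:
  assumes "linear L" "s > 0" "norm v = 1"
  shows "L v + derivative_remainder \<Phi> L P (s *\<^sub>R v) = (\<Phi> (P + s *\<^sub>R v) - \<Phi> P) /\<^sub>R s"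
proof -
  have "L v + derivative_remainder \<Phi> L P (s *\<^sub>R v) = L v + (\<Phi> (P + s *\<^sub>R v) - \<Phi> P - s *\<^sub>R L v) /\<^sub>R s"
    using assms by (auto simp: derivative_remainder_def linear_scale)
  also have "\<dots> = (\<Phi> (P + s *\<^sub>R v) - \<Phi> P) /\<^sub>R s"
    using assms by (simp add: algebra_simps)
  finally show ?thesis .
qed

text \<open>The homotopy \<open>K(t, v) = \<Phi>(P + t\<epsilon>v) / t\<epsilon>\<close>, extended by the derivative at \<open>t = 0\<close>,
  has no zero on the sphere because \<open>P\<close> is the only zero of \<open>\<Phi>\<close> in the ball.\<close>

lemma sphere_degree_isolated_zero:
  fixes \<Phi> L :: "real^4 \<Rightarrow> real^4"
  assumes d: "(\<Phi> has_derivative L) (at P)" and c: "continuous_on UNIV \<Phi>"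
    and zero: "\<Phi> P = 0" and det: "det (matrix L) \<noteq> 0" and e: "\<epsilon> > 0"
    and isolated: "\<And>x. x \<in> cball P \<epsilon> \<Longrightarrow> \<Phi> x = 0 \<Longrightarrow> x = P"
  shows "sphere_degree (\<lambda>v. \<Phi> (P + \<epsilon> *\<^sub>R v)) = sphere_degree L"
proof -
  define K where "K = (\<lambda>p::real \<times> (real^4).
      L (snd p) + derivative_remainder \<Phi> L P ((fst p * \<epsilon>) *\<^sub>R snd p))"
  have lin: "linear L" using d has_derivative_linear by blast
  have K_pos: "K (t, v) = \<Phi> (P + (t * \<epsilon>) *\<^sub>R v) /\<^sub>R (t * \<epsilon>)" if "t > 0" "norm v = 1" for t v
    unfolding K_def using derivative_remainder_scaleR[OF lin _ that(2)] that e zero by simp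
  have "sphere_degree (\<lambda>v. K (0, v)) = sphere_degree (\<lambda>v. K (1, v))"
  proof (rule sphere_degree_homotopic)
    have "continuous_on ({0..1} \<times> sphere 0 1) (\<lambda>p::real \<times> (real^4). L (snd p))"
      by (rule continuous_on_compose2[OF linear_continuous_on[OF has_derivative_bounded_linear[OF d]]])
        (auto intro: continuous_intros)
    then show "continuous_on ({0..1} \<times> sphere 0 1) K"
      unfolding K_def
      by (intro continuous_intros continuous_on_compose2[OF continuous_on_derivative_remainder[OF d c],
          where f="\<lambda>p. (fst p * \<epsilon>) *\<^sub>R snd p"]) auto
    show "\<forall>t\<in>{0..1}. \<forall>x\<in>sphere 0 1. K (t, x) \<noteq> 0"
    proof (intro ballI)
      fix t x assume t: "t \<in> {0..(1::real)}" and x: "(x::real^4) \<in> sphere 0 1"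
      show "K (t, x) \<noteq> 0"
      proof (cases "t = 0")
        case True
        have "inj L" using det det_nz_iff_inj[OF lin] by simp
        then have "L x \<noteq> 0" using x lin linear_injective_0 by fastforce
        then show ?thesis unfolding K_def derivative_remainder_def using True by simp
      next
        case False
        then have "t > 0" using t by simp
        have "P + (t * \<epsilon>) *\<^sub>R x \<in> cball P \<epsilon>" "P + (t * \<epsilon>) *\<^sub>R x \<noteq> P"
          using t x e \<open>t > 0\<close> by (auto simp: dist_norm)
        then have "\<Phi> (P + (t * \<epsilon>) *\<^sub>R x) \<noteq> 0" using isolated by blast
        then show ?thesis using K_pos[OF \<open>t > 0\<close>] x e \<open>t > 0\<close> by simp
      qed
    qed
  qed
  moreover have "(\<lambda>v. K (0, v)) = L" unfolding K_def derivative_remainder_def by auto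
  moreover have "sphere_degree (\<lambda>v. K (1, v)) = sphere_degree (\<lambda>v. \<Phi> (P + \<epsilon> *\<^sub>R v))"
    by (rule sphere_degree_cong) (use K_pos[of 1] e in \<open>simp add: sgn_scaleR\<close>)
  ultimately show ?thesis by simp
qed

section \<open>The map \<open>\<phi>\<close> of two mixed polynomials\<close>

lemma vector_2_eq_sum_axis: "(vector [a, b] :: real^2) = a *\<^sub>R axis 1 1 + b *\<^sub>R axis 2 1"
  unfolding vec_eq_iff by (auto simp: axis_def forall_2)

lemma vector_4_eq_sum_axis:
  "(vector [a, b, c, d] :: real^4) = a *\<^sub>R axis 1 1 + b *\<^sub>R axis 2 1 + c *\<^sub>R axis 3 1 + d *\<^sub>R axis 4 1"
  unfolding vec_eq_iff by (auto simp: axis_def forall_4)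

lemma differentiable_Complex_vec_nth: "(\<lambda>x::real^'n. Complex (x$k) (x$l)) differentiable (at x)"
proof -
  have "(\<lambda>x::real^'n. Complex (x$k) (x$l)) = (\<lambda>x. of_real (x$k) + \<i> * of_real (x$l))"
    by (simp add: fun_eq_iff complex_eq_iff)
  moreover have "bounded_linear (\<lambda>x::real^'n. (of_real (x$j) :: complex))" for j
    by (rule bounded_linear_compose[OF bounded_linear_of_real bounded_linear_vec_nth])
  ultimately show ?thesis
    by (simp add: bounded_linear_imp_differentiable)
qed

lemma mixed_poly_differentiable:
  assumes "mixed_poly f"
  shows "(\<lambda>x. f (to_C2 x)) differentiable (at x)"
proof -
  obtain c N where f: "\<And>z1 z2. f (z1, z2) =
      (\<Sum>a\<le>N. \<Sum>b\<le>N. \<Sum>d\<le>N. \<Sum>e\<le>N. c (a, b, d, e) * z1 ^ a * cnj z1 ^ b * z2 ^ d * cnj z2 ^ e)"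
    using assms unfolding mixed_poly_def by blast
  have cnj: "(\<lambda>x::real^4. cnj (Complex (x$k) (x$l))) differentiable (at x)" for k l
    by (rule differentiable_compose[OF bounded_linear_imp_differentiable[OF bounded_linear_cnj]
          differentiable_Complex_vec_nth])
  show ?thesis
    unfolding to_C2_def f
    by (intro differentiable_sum ballI finite_atMost derivative_intros
        differentiable_Complex_vec_nth cnj)
qed

lemma re_part_differentiable: "mixed_poly f \<Longrightarrow> re_part f differentiable (at x)"
  unfolding re_part_def
  by (rule differentiable_compose[OF bounded_linear_imp_differentiable[OF bounded_linear_Re]
        mixed_poly_differentiable])

lemma im_part_differentiable: "mixed_poly f \<Longrightarrow> im_part f differentiable (at x)"
  unfolding im_part_def
  by (rule differentiable_compose[OF bounded_linear_imp_differentiable[OF bounded_linear_Im]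
        mixed_poly_differentiable])

lemma mixed_poly_has_derivative_jac:
  assumes "mixed_poly f"
  shows "((\<lambda>x. vector [re_part f x, im_part f x] :: real^2) has_derivative (\<lambda>h. jac f P *v h)) (at P)"
proof -
  define F where "F = (\<lambda>x. vector [re_part f x, im_part f x] :: real^2)"
  have "F differentiable (at P)"
    unfolding F_def vector_2_eq_sum_axis
    by (intro differentiable_add differentiable_scaleR differentiable_const
        re_part_differentiable im_part_differentiable assms)
  then have D: "(F has_derivative frechet_derivative F (at P)) (at P)"
    unfolding frechet_derivative_works .
  then have "(\<lambda>h. jac f P *v h) = frechet_derivative F (at P)"
    unfolding jac_def F_def[symmetric]
    using has_derivative_linear[OF D] by (simp add: fun_eq_iff matrix_works)
  with D show ?thesis by (simp add: F_def)
qed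

lemma re_part_has_derivative:
  assumes "mixed_poly f"
  shows "(re_part f has_derivative (\<lambda>h. grad_re f P \<bullet> h)) (at P)"
  using bounded_linear.has_derivative[OF bounded_linear_vec_nth
      mixed_poly_has_derivative_jac[OF assms], of 1]
  by (simp add: grad_re_def row_def matrix_vector_mul_component)

lemma im_part_has_derivative:
  assumes "mixed_poly f"
  shows "(im_part f has_derivative (\<lambda>h. grad_im f P \<bullet> h)) (at P)"
  using bounded_linear.has_derivative[OF bounded_linear_vec_nth
      mixed_poly_has_derivative_jac[OF assms], of 2]
  by (simp add: grad_im_def row_def matrix_vector_mul_component)

lemma phi_map_has_derivative:
  assumes "mixed_poly f" "mixed_poly g"
  shows "(phi_map f g has_derivative
      (\<lambda>h. vector [grad_re f P, grad_im f P, grad_re g P, grad_im g P] *v h)) (at P)"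
proof -
  have "(phi_map f g has_derivative (\<lambda>h. vector [grad_re f P \<bullet> h, grad_im f P \<bullet> h,
      grad_re g P \<bullet> h, grad_im g P \<bullet> h])) (at P)"
    unfolding phi_map_def[abs_def] vector_4_eq_sum_axis
    using assms by (auto intro!: derivative_eq_intros re_part_has_derivative im_part_has_derivative)
  moreover have "vector [grad_re f P \<bullet> h, grad_im f P \<bullet> h, grad_re g P \<bullet> h, grad_im g P \<bullet> h]
      = (vector [grad_re f P, grad_im f P, grad_re g P, grad_im g P] :: real^4^4) *v h" for h
    unfolding vec_eq_iff forall_4 by (simp add: matrix_vector_mul_component)
  ultimately show ?thesis by simp
qed

lemma phi_map_eq_0_iff: "phi_map f g x = 0 \<longleftrightarrow> x \<in> zero_set f \<inter> zero_set g"
  by (simp add: phi_map_def vec_eq_iff forall_4 zero_set_def re_part_def im_part_def complex_eq_iff)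

lemma grad_inner_tangent_space:
  assumes "u \<in> tangent_space f P"
  shows "grad_re f P \<bullet> u = 0" "grad_im f P \<bullet> u = 0"
proof -
  have "jac f P *v u = 0" using assms by (simp add: tangent_space_def)
  then have "(jac f P *v u) $ 1 = 0" "(jac f P *v u) $ 2 = 0" by simp_all
  then show "grad_re f P \<bullet> u = 0" "grad_im f P \<bullet> u = 0"
    by (simp_all add: grad_re_def grad_im_def row_def matrix_vector_mul_component)
qed

lemma span_tangent_bases_eq_UNIV:
  assumes "transverse_at f g P"
    and "positive_tangent_basis f P u1 u2" "positive_tangent_basis g P v1 v2"
  shows "span {u1, u2, v1, v2} = UNIV"
proof -
  have "UNIV = span (span {u1, u2} \<union> span {v1, v2})"
    using assms by (simp add: transverse_at_def positive_tangent_basis_def)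
  also have "\<dots> \<subseteq> span {u1, u2, v1, v2}"
    by (intro span_minimal subspace_span Un_least span_mono) auto
  finally show ?thesis by auto
qed

theorem proposition3:
  fixes f g :: "complex \<times> complex \<Rightarrow> complex" and P :: "real^4"
  assumes "mixed_poly f" and "mixed_poly g"
    and "P \<in> zero_set f \<inter> zero_set g"
    and "mixed_nonsingular_at f P" and "mixed_nonsingular_at g P"
    and "transverse_at f g P"
    and "positive_tangent_basis f P u1 u2"
    and "positive_tangent_basis g P v1 v2"
    and "\<epsilon> > 0"
    and "zero_set f \<inter> zero_set g \<inter> cball P \<epsilon> = {P}"
  shows "real_of_int (local_intersection_degree f g P \<epsilon>) = sgn (det4 u1 u2 v1 v2)"
proof -
  let ?N = "vector [grad_re f P, grad_im f P, grad_re g P, grad_im g P] :: real^4^4"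
  have tangent: "det4 u1 u2 v1 v2 \<noteq> 0"
    using assms(6-8) by (intro det4_neq_0_if_span_eq_UNIV span_tangent_bases_eq_UNIV)
  have normal: "sgn (det ?N) = sgn (det4 u1 u2 v1 v2)"
    unfolding det4_def[symmetric]
    by (rule sgn_det4_normals_eq)
       (use assms(7,8) grad_inner_tangent_space tangent in \<open>auto simp: positive_tangent_basis_def\<close>)
  then have nondegenerate: "det (matrix (\<lambda>h. ?N *v h)) \<noteq> 0"
    using tangent by (metis matrix_of_matrix_vector_mul sgn_zero_iff)
  have "continuous_on UNIV (phi_map f g)"
    using phi_map_has_derivative[OF assms(1,2)]
    by (meson differentiableI differentiable_imp_continuous_on differentiable_on_def)
  moreover have "x = P" if "x \<in> cball P \<epsilon>" "phi_map f g x = 0" for x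
    using that assms(10) unfolding phi_map_eq_0_iff by blast
  ultimately have "sphere_degree (\<lambda>v. phi_map f g (P + \<epsilon> *\<^sub>R v)) = sphere_degree (\<lambda>h. ?N *v h)"
    using phi_map_has_derivative[OF assms(1,2)] nondegenerate assms(3,9)
    by (intro sphere_degree_isolated_zero) (auto simp: phi_map_eq_0_iff)
  then show ?thesis
    using sphere_degree_linear[of "\<lambda>h. ?N *v h"] nondegenerate normal
    by (simp add: local_intersection_degree_def sphere_degree_def)
qed

end
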